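(* Identify $\operatorname{Pic}(\mathcal{X}_n)$ with the standard $D_5^{(1)}$ Picard lattice via the preliminary basis change $\mathcal{H}_f=2\mathcal{H}_x+\mathcal{H}_y-\mathcal{F}_{1356}$, $\mathcal{H}_g=\mathcal{H}_x$, $\mathcal{E}_1=\mathcal{H}_x-\mathcal{F}_1$, $\mathcal{E}_2=\mathcal{F}_2$, $\mathcal{E}_3=\mathcal{H}_x-\mathcal{F}_3$, $\mathcal{E}_4=\mathcal{F}_4$, $\mathcal{E}_5=\mathcal{H}_x-\mathcal{F}_6$, $\mathcal{E}_6=\mathcal{H}_x-\mathcal{F}_5$, $\mathcal{E}_7=\mathcal{F}_7$, $\mathcal{E}_8=\mathcal{F}_8$. Under this identification the standard surface roots $\delta_i$ coincide with the surface roots of $\mathcal{X}_n$, the standard symmetry roots become $\alpha_0=\mathcal{F}_1-\mathcal{F}_2$, $\alpha_1=\mathcal{H}_y-\mathcal{F}_{13}$, $\alpha_2=\mathcal{F}_3-\mathcal{F}_4$, $\alpha_3=2\mathcal{H}_x+\mathcal{H}_y-\mathcal{F}_{135678}$, and the map $\varphi_*$ acts on them as the translation $$(\alpha_0,\alpha_1,\alpha_2,\alpha_3)\mapsto(\alpha_0,\alpha_1-\delta,\alpha_2,\alpha_3+\delta),\qquad \delta=-\mathcal{K}_{\mathcal{X}}.$$ Moreover, on the Picard lattice, $\varphi_*=\sigma_3\sigma_2w_1w_2w_0w_1$, hence $\varphi_*=w_1\circ\phi_*\circ w_1$ where $\phi_*=\sigma_3\sigma_2w_3w_1w_2w_0$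 is the standard translation $(\alpha_0,\alpha_1,\alpha_2,\alpha_3)\mapsto(\alpha_0-\delta,\alpha_1+\delta,\alpha_2-\delta,\alpha_3+\delta)$.
   Context: Standard $D_5^{(1)}$ Picard lattice: generators $\mathcal{H}_f,\mathcal{H}_g,\mathcal{E}_1,\dots,\mathcal{E}_8$ with $\mathcal{H}_f\cdot\mathcal{H}_g=1$, $\mathcal{H}_f^2=\mathcal{H}_g^2=0$, $\mathcal{H}\cdot\mathcal{E}_i=0$, $\mathcal{E}_i\cdot\mathcal{E}_j=-\delta_{ij}$. Standard surface roots: $\delta_0=\mathcal{E}_1-\mathcal{E}_2$, $\delta_1=\mathcal{E}_3-\mathcal{E}_4$, $\delta_2=\mathcal{H}_f-\mathcal{E}_1-\mathcal{E}_3$, $\delta_3=\mathcal{H}_g-\mathcal{E}_5-\mathcal{E}_7$, $\delta_4=\mathcal{E}_5-\mathcal{E}_6$, $\delta_5=\mathcal{E}_7-\mathcal{E}_8$. Standard symmetry roots ($A_3^{(1)}$, cyclic diagram $\alpha_0-\alpha_1-\alpha_2-\alpha_3-\alpha_0$): $\alpha_0=\mathcal{H}_g-\mathcal{E}_1-\mathcal{E}_2$, $\alpha_1=\mathcal{H}_f-\mathcal{E}_5-\mathcal{E}_6$, $\alpha_2=\mathcal{H}_g-\mathcal{E}_3-\mathcal{E}_4$, $\alpha_3=\mathcal{H}_f-\mathcal{E}_7-\mathcal{E}_8$; $\delta=\alpha_0+\alpha_1+\alpha_2+\alpha_3=2\mathcal{H}_f+2\mathcal{H}_g-\sum\mathcal{E}_i$.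 Reflections $w_j(\mathcal{C})=\mathcal{C}+(\mathcal{C}\cdot\alpha_j)\alpha_j$, and for a root $r$ write $w_r(\mathcal{C})=\mathcal{C}+(\mathcal{C}\cdot r)r$; $\sigma_2=w_{\mathcal{E}_1-\mathcal{E}_3}\circ w_{\mathcal{E}_2-\mathcal{E}_4}$, $\sigma_3=w_{\mathcal{E}_5-\mathcal{E}_7}\circ w_{\mathcal{E}_6-\mathcal{E}_8}$. $\mathcal{X}_n$, its Picard lattice ($\mathcal{H}_x,\mathcal{H}_y,\mathcal{F}_1,\dots,\mathcal{F}_8$), its surface roots $\delta_0=\mathcal{H}_x-\mathcal{F}_1-\mathcal{F}_2$, $\delta_1=\mathcal{H}_x-\mathcal{F}_3-\mathcal{F}_4$, $\delta_2=\mathcal{H}_y-\mathcal{F}_5-\mathcal{F}_6$, $\delta_3=\mathcal{F}_6-\mathcal{F}_7$, $\delta_4=\mathcal{F}_5-\mathcal{F}_6$, $\delta_5=\mathcal{F}_7-\mathcal{F}_8$, and $\varphi_*$ are as follows: $\mathcal{X}_n$ is $\mathbb{P}^1\times\mathbb{P}^1$ blown up at $q_1(x=0,y=n)$, $q_2(x=0,y=n+\beta)$, $q_3(1/x=0,y=0)$, $q_4(1/x=0,y=-\alpha)$ and a cascade $q_5\leftarrow q_6\leftarrow q_7\leftarrow q_8$ over $(x=1/s,y=\infty)$; $\varphi_*$ is the pushforward of the forward map of the recurrence $x_nx_{n+1}=\frac{y_n^2-(2n+\beta)y_n+n(n+\beta)}{s^2(y_n^2+\alpha y_n)}$, $y_n+y_{n-1}=-\frac{\alpha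 s^2x_n^2+s(2n-1-\alpha+\beta+s)x_n-2n-\beta+1}{(1-sx_n)^2}$, given by $\mathcal{H}_x\mapsto5\mathcal{H}_x+2\mathcal{H}_y-\mathcal{F}_{1234}-2\mathcal{F}_{5678}$, $\mathcal{H}_y\mapsto2\mathcal{H}_x+\mathcal{H}_y-\mathcal{F}_{5678}$, $\mathcal{F}_1\mapsto2\mathcal{H}_x+\mathcal{H}_y-\mathcal{F}_{25678}$, $\mathcal{F}_2\mapsto2\mathcal{H}_x+\mathcal{H}_y-\mathcal{F}_{15678}$, $\mathcal{F}_3\mapsto2\mathcal{H}_x+\mathcal{H}_y-\mathcal{F}_{45678}$, $\mathcal{F}_4\mapsto2\mathcal{H}_x+\mathcal{H}_y-\mathcal{F}_{35678}$, $\mathcal{F}_5\mapsto\mathcal{H}_x-\mathcal{F}_8$, $\mathcal{F}_6\mapsto\mathcal{H}_x-\mathcal{F}_7$, $\mathcal{F}_7\mapsto\mathcal{H}_x-\mathcal{F}_6$, $\mathcal{F}_8\mapsto\mathcal{H}_x-\mathcal{F}_5$ (image classes on $\mathcal{X}_{n+1}$). Notation $\mathcal{F}_{i\cdots j}$ = sum of the listed $\mathcal{F}$'s. *)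

theory Defs
  imports "HOL-Analysis.Analysis"
begin

text \<open>Picard lattices of rank 10 are modelled as int^10. Coordinate 0 is the
coefficient of H_f (resp. H_x), coordinate 1 that of H_g (resp. H_y), and
coordinate k+1 that of E_k (resp. F_k), k = 1..8.\<close>

type_synonym pic = "int ^ 10"

definition H1 :: pic where "H1 = axis 0 1"
definition H2 :: pic where "H2 = axis 1 1"
definition Ex :: "nat \<Rightarrow> pic" where "Ex k = axis (of_nat (k + 1)) 1"

abbreviation Hf where "Hf \<equiv> H1"
abbreviation Hg where "Hg \<equiv> H2"
abbreviation E where "E \<equiv> Ex"
abbreviation Hx where "Hx \<equiv> H1"
abbreviation Hy where "Hy \<equiv> H2"
abbreviation F where "F \<equiv> Ex"

definition ip :: "pic \<Rightarrow> pic \<Rightarrow> int" where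
  "ip C D = C $ 0 * D $ 1 + C $ 1 * D $ 0
     - (\<Sum>k\<in>{1..8::nat}. C $ of_nat (k + 1) * D $ of_nat (k + 1))"

definition Fsum :: "nat list \<Rightarrow> pic" where "Fsum ks = sum_list (map F ks)"

definition wr :: "pic \<Rightarrow> pic \<Rightarrow> pic" where "wr r C = C + (ip C r) *s r"

definition dStd :: "nat \<Rightarrow> pic" where
  "dStd k = [E 1 - E 2, E 3 - E 4, Hf - E 1 - E 3, Hg - E 5 - E 7, E 5 - E 6, E 7 - E 8] ! k"

definition aStd :: "nat \<Rightarrow> pic" where
  "aStd k = [Hg - E 1 - E 2, Hf - E 5 - E 6, Hg - E 3 - E 4, Hf - E 7 - E 8] ! k"

definition deltaStd :: pic where
  "deltaStd = 2 *s Hf + 2 *s Hg - (\<Sum>k\<in>{1..8::nat}. E k)"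

definition w :: "nat \<Rightarrow> pic \<Rightarrow> pic" where "w j = wr (aStd j)"

definition sigma2 :: "pic \<Rightarrow> pic" where
  "sigma2 = wr (E 1 - E 3) \<circ> wr (E 2 - E 4)"
definition sigma3 :: "pic \<Rightarrow> pic" where
  "sigma3 = wr (E 5 - E 7) \<circ> wr (E 6 - E 8)"

definition dX :: "nat \<Rightarrow> pic" where
  "dX k = [Hx - F 1 - F 2, Hx - F 3 - F 4, Hy - F 5 - F 6, F 6 - F 7, F 5 - F 6, F 7 - F 8] ! k"

definition KX :: pic where
  "KX = - 2 *s Hx - 2 *s Hy + (\<Sum>k\<in>{1..8::nat}. F k)"

definition phiImg :: "nat \<Rightarrow> pic" where
  "phiImg k = [5 *s Hx + 2 *s Hy - Fsum [1,2,3,4] - 2 *s Fsum [5,6,7,8],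
               2 *s Hx + Hy - Fsum [5,6,7,8],
               2 *s Hx + Hy - Fsum [2,5,6,7,8],
               2 *s Hx + Hy - Fsum [1,5,6,7,8],
               2 *s Hx + Hy - Fsum [4,5,6,7,8],
               2 *s Hx + Hy - Fsum [3,5,6,7,8],
               Hx - F 8, Hx - F 7, Hx - F 6, Hx - F 5] ! k"

definition phiX :: "pic \<Rightarrow> pic" where
  "phiX C = (\<Sum>k<10. C $ of_nat k *s phiImg k)"

definition iotaImg :: "nat \<Rightarrow> pic" where
  "iotaImg k = [2 *s Hx + Hy - Fsum [1,3,5,6], Hx,
                Hx - F 1, F 2, Hx - F 3, F 4, Hx - F 6, Hx - F 5, F 7, F 8] ! k"

definition iota :: "pic \<Rightarrow> pic" where
  "iota C = (\<Sum>k<10. C $ of_nat k *s iotaImg k)"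

end

theory Submission
  imports Defs
begin

(* All maps here are Z-linear maps of Z^10, so each identity is a finite computation with
   the matrices of iota, phi_*, the reflections w_j and the permutations sigma_2, sigma_3.
   The factorisation through w_1 is structural: sigma = sigma_3 sigma_2 is a linear isometry
   sending alpha_3 to alpha_1, hence sigma w_3 = w_1 sigma, and w_1 is an involution, so
   sigma w_1 w_2 w_0 w_1 = w_1 (sigma w_3 w_1 w_2 w_0) w_1. *)

lemma exhaust_10:
  fixes i :: 10
  shows "i = 0 \<or> i = 1 \<or> i = 2 \<or> i = 3 \<or> i = 4 \<or> i = 5 \<or> i = 6 \<or> i = 7 \<or> i = 8 \<or> i = 9"
proof (induct i)
  case (of_int z)
  then have "0 \<le> z" "z < 10" by simp_all
  then have "z = 0 \<or> z = 1 \<or> z = 2 \<or> z = 3 \<or> z = 4 \<or> z = 5 \<or> z = 6 \<or> z = 7 \<or> z = 8 \<or> z = 9"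
    by arith
  then show ?case by auto
qed

lemma forall_10:
  "(\<forall>i::10. P i) \<longleftrightarrow> P 0 \<and> P 1 \<and> P 2 \<and> P 3 \<and> P 4 \<and> P 5 \<and> P 6 \<and> P 7 \<and> P 8 \<and> P 9"
  by (metis exhaust_10)

lemma sum_lessThan_10:
  "(\<Sum>k<10::nat. f k) = f 0 + f 1 + f 2 + f 3 + f 4 + f 5 + f 6 + f 7 + f 8 + f 9"
  by (simp add: numeral_eq_Suc ac_simps)

lemma sum_atLeastAtMost_1_8:
  "(\<Sum>k\<in>{1..8::nat}. f k) = f 1 + f 2 + f 3 + f 4 + f 5 + f 6 + f 7 + f 8"
  by (simp add: numeral_eq_Suc atLeastAtMostSuc_conv ac_simps)

lemma ip_commute: "ip C D = ip D C"
  unfolding ip_def by (simp add: algebra_simps)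

lemma ip_add_left: "ip (C + C') D = ip C D + ip C' D"
  unfolding ip_def by (simp add: algebra_simps sum.distrib)

lemma ip_scale_left: "ip (a *s C) D = a * ip C D"
  unfolding ip_def by (simp add: algebra_simps sum_distrib_left)

lemma ip_add_right: "ip C (D + D') = ip C D + ip C D'"
  by (simp add: ip_commute[of C] ip_add_left)

lemma ip_scale_right: "ip C (a *s D) = a * ip C D"
  by (simp add: ip_commute[of C] ip_scale_left)

definition lattice_isometry :: "(pic \<Rightarrow> pic) \<Rightarrow> bool" where
  "lattice_isometry f \<longleftrightarrow> (\<forall>C D. f (C + D) = f C + f D) \<and> (\<forall>a C. f (a *s C) = a *s f C)
     \<and> (\<forall>C D. ip (f C) (f D) = ip C D)"

lemma lattice_isometry_comp:
  "lattice_isometry f \<Longrightarrow> lattice_isometry g \<Longrightarrow> lattice_isometry (f \<circ> g)"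
  by (simp add: lattice_isometry_def)

lemma wr_add: "wr r (C + D) = wr r C + wr r D"
  by (simp add: wr_def ip_add_left vec_eq_iff algebra_simps)

lemma wr_scale: "wr r (a *s C) = a *s wr r C"
  by (simp add: wr_def ip_scale_left vec_eq_iff algebra_simps)

lemma ip_wr:
  assumes "ip r r = -2"
  shows "ip (wr r C) (wr r D) = ip C D"
proof -
  have "ip (wr r C) (wr r D) = ip C D + ip C r * ip r D + ip D r * ip C r + ip C r * ip D r * ip r r"
    by (simp add: wr_def ip_add_left ip_add_right ip_scale_left ip_scale_right algebra_simps)
  then show ?thesis
    using assms by (simp add: ip_commute[of r C] ip_commute[of r D] algebra_simps)
qed

lemma lattice_isometry_wr:
  assumes "ip r r = -2"
  shows "lattice_isometry (wr r)"
  using assms by (simp add: lattice_isometry_def wr_add wr_scale ip_wr)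

lemma wr_wr:
  assumes "ip r r = -2"
  shows "wr r (wr r C) = C"
  using assms by (simp add: wr_def ip_add_left ip_scale_left vec_eq_iff algebra_simps)

lemma lattice_isometry_wr_conj:
  assumes "lattice_isometry f"
  shows "f (wr r C) = wr (f r) (f C)"
  using assms by (simp add: lattice_isometry_def wr_def)

lemmas basis_defs = H1_def H2_def Ex_def axis_def Fsum_def

lemma ip_explicit:
  "ip C D = C$0 * D$1 + C$1 * D$0 - C$2 * D$2 - C$3 * D$3 - C$4 * D$4 - C$5 * D$5
     - C$6 * D$6 - C$7 * D$7 - C$8 * D$8 - C$9 * D$9"
  by (simp add: ip_def numeral_eq_Suc atLeastAtMostSuc_conv)

lemma deltaStd_explicit:
  "deltaStd = 2 *s Hf + 2 *s Hg - (E 1 + E 2 + E 3 + E 4 + E 5 + E 6 + E 7 + E 8)"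
  unfolding deltaStd_def sum_atLeastAtMost_1_8 ..

lemma KX_explicit:
  "KX = - 2 *s Hx - 2 *s Hy + (F 1 + F 2 + F 3 + F 4 + F 5 + F 6 + F 7 + F 8)"
  unfolding KX_def sum_atLeastAtMost_1_8 ..

lemma iota_component:
  "iota C $ 0 = 2 * C$0 + C$1 + C$2 + C$4 + C$6 + C$7" "iota C $ 1 = C$0"
  "iota C $ 2 = - C$0 - C$2" "iota C $ 3 = C$3" "iota C $ 4 = - C$0 - C$4" "iota C $ 5 = C$5"
  "iota C $ 6 = - C$0 - C$7" "iota C $ 7 = - C$0 - C$6" "iota C $ 8 = C$8" "iota C $ 9 = C$9"
  by (simp_all add: iota_def iotaImg_def sum_lessThan_10 basis_defs)

lemma phiX_component:
  "phiX C $ 0 = 5 * C$0 + 2 * C$1 + 2 * C$2 + 2 * C$3 + 2 * C$4 + 2 * C$5 + C$6 + C$7 + C$8 + C$9"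
  "phiX C $ 1 = 2 * C$0 + C$1 + C$2 + C$3 + C$4 + C$5"
  "phiX C $ 2 = - C$0 - C$3" "phiX C $ 3 = - C$0 - C$2"
  "phiX C $ 4 = - C$0 - C$5" "phiX C $ 5 = - C$0 - C$4"
  "phiX C $ 6 = - 2 * C$0 - C$1 - C$2 - C$3 - C$4 - C$5 - C$9"
  "phiX C $ 7 = - 2 * C$0 - C$1 - C$2 - C$3 - C$4 - C$5 - C$8"
  "phiX C $ 8 = - 2 * C$0 - C$1 - C$2 - C$3 - C$4 - C$5 - C$7"
  "phiX C $ 9 = - 2 * C$0 - C$1 - C$2 - C$3 - C$4 - C$5 - C$6"
  by (simp_all add: phiX_def phiImg_def sum_lessThan_10 basis_defs algebra_simps)

lemma w_component:
  "w 0 C $ 0 = C$0" "w 0 C $ 1 = C$0 + C$1 + C$2 + C$3" "w 0 C $ 2 = - C$0 - C$3"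
  "w 0 C $ 3 = - C$0 - C$2" "w 0 C $ 4 = C$4" "w 0 C $ 5 = C$5" "w 0 C $ 6 = C$6"
  "w 0 C $ 7 = C$7" "w 0 C $ 8 = C$8" "w 0 C $ 9 = C$9"
  "w 1 C $ 0 = C$0 + C$1 + C$6 + C$7" "w 1 C $ 1 = C$1" "w 1 C $ 2 = C$2" "w 1 C $ 3 = C$3"
  "w 1 C $ 4 = C$4" "w 1 C $ 5 = C$5" "w 1 C $ 6 = - C$1 - C$7" "w 1 C $ 7 = - C$1 - C$6"
  "w 1 C $ 8 = C$8" "w 1 C $ 9 = C$9"
  "w 2 C $ 0 = C$0" "w 2 C $ 1 = C$0 + C$1 + C$4 + C$5" "w 2 C $ 2 = C$2" "w 2 C $ 3 = C$3"
  "w 2 C $ 4 = - C$0 - C$5" "w 2 C $ 5 = - C$0 - C$4" "w 2 C $ 6 = C$6" "w 2 C $ 7 = C$7"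
  "w 2 C $ 8 = C$8" "w 2 C $ 9 = C$9"
  "w 3 C $ 0 = C$0 + C$1 + C$8 + C$9" "w 3 C $ 1 = C$1" "w 3 C $ 2 = C$2" "w 3 C $ 3 = C$3"
  "w 3 C $ 4 = C$4" "w 3 C $ 5 = C$5" "w 3 C $ 6 = C$6" "w 3 C $ 7 = C$7"
  "w 3 C $ 8 = - C$1 - C$9" "w 3 C $ 9 = - C$1 - C$8"
  by (simp_all add: w_def wr_def ip_explicit aStd_def basis_defs algebra_simps)

lemma sigma_component:
  "sigma2 C $ 0 = C$0" "sigma2 C $ 1 = C$1" "sigma2 C $ 2 = C$4" "sigma2 C $ 3 = C$5"
  "sigma2 C $ 4 = C$2" "sigma2 C $ 5 = C$3" "sigma2 C $ 6 = C$6" "sigma2 C $ 7 = C$7"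
  "sigma2 C $ 8 = C$8" "sigma2 C $ 9 = C$9"
  "sigma3 C $ 0 = C$0" "sigma3 C $ 1 = C$1" "sigma3 C $ 2 = C$2" "sigma3 C $ 3 = C$3"
  "sigma3 C $ 4 = C$4" "sigma3 C $ 5 = C$5" "sigma3 C $ 6 = C$8" "sigma3 C $ 7 = C$9"
  "sigma3 C $ 8 = C$6" "sigma3 C $ 9 = C$7"
  by (simp_all add: sigma2_def sigma3_def wr_def ip_explicit basis_defs algebra_simps)

lemmas pic_components = iota_component phiX_component w_component sigma_component

definition iota_inv :: "pic \<Rightarrow> pic" where
  "iota_inv C = C$0 *s Hg + C$1 *s (Hf + 2 *s Hg - Fsum [1,3,5,6]) + C$2 *s (Hg - E 1) + C$3 *s E 2
     + C$4 *s (Hg - E 3) + C$5 *s E 4 + C$6 *s (Hg - E 6) + C$7 *s (Hg - E 5) + C$8 *s E 7 + C$9 *s E 8"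

lemma bij_iota: "bij iota"
proof (rule o_bij)
  show "iota \<circ> iota_inv = id" "iota_inv \<circ> iota = id"
    by (simp_all add: fun_eq_iff vec_eq_iff forall_10 iota_component iota_inv_def basis_defs)
qed

lemma ip_iota: "ip (iota C) (iota D) = ip C D"
  by (simp add: ip_explicit iota_component algebra_simps)

lemma iota_dStd: "i < 6 \<Longrightarrow> iota (dStd i) = dX i"
  unfolding vec_eq_iff forall_10 iota_component
  by (auto simp: less_Suc_eq numeral_eq_Suc dStd_def dX_def basis_defs)

lemma iota_aStd:
  "iota (aStd 0) = F 1 - F 2"
  "iota (aStd 1) = Hy - Fsum [1,3]"
  "iota (aStd 2) = F 3 - F 4"
  "iota (aStd 3) = 2 *s Hx + Hy - Fsum [1,3,5,6,7,8]"
  by (simp_all add: vec_eq_iff forall_10 iota_component aStd_def basis_defs)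

lemma iota_deltaStd: "iota deltaStd = - KX"
  by (simp add: vec_eq_iff forall_10 iota_component deltaStd_explicit KX_explicit basis_defs)

lemma phiX_iota_aStd:
  "phiX (iota (aStd 0)) = iota (aStd 0)"
  "phiX (iota (aStd 1)) = iota (aStd 1) - (- KX)"
  "phiX (iota (aStd 2)) = iota (aStd 2)"
  "phiX (iota (aStd 3)) = iota (aStd 3) + (- KX)"
  by (simp_all add: vec_eq_iff forall_10 iota_component phiX_component aStd_def KX_explicit
      basis_defs)

lemma phiX_iota: "phiX (iota C) = iota ((sigma3 \<circ> sigma2 \<circ> w 1 \<circ> w 2 \<circ> w 0 \<circ> w 1) C)"
  by (simp only: vec_eq_iff forall_10 o_apply pic_components) (simp add: algebra_simps)

abbreviation phi_std :: "pic \<Rightarrow> pic" where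
  "phi_std \<equiv> sigma3 \<circ> sigma2 \<circ> w 3 \<circ> w 1 \<circ> w 2 \<circ> w 0"

lemma phi_std_aStd:
  "phi_std (aStd 0) = aStd 0 - deltaStd"
  "phi_std (aStd 1) = aStd 1 + deltaStd"
  "phi_std (aStd 2) = aStd 2 - deltaStd"
  "phi_std (aStd 3) = aStd 3 + deltaStd"
  by (simp_all only: vec_eq_iff forall_10 o_apply pic_components)
    (simp_all add: aStd_def deltaStd_explicit basis_defs)

lemma ip_aStd_self: "j < 4 \<Longrightarrow> ip (aStd j) (aStd j) = -2"
  by (auto simp: less_Suc_eq numeral_eq_Suc aStd_def ip_explicit basis_defs)

lemma w_w: "j < 4 \<Longrightarrow> w j (w j C) = C"
  by (simp add: w_def wr_wr ip_aStd_self)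

lemma lattice_isometry_sigma: "lattice_isometry (sigma3 \<circ> sigma2)"
  unfolding sigma2_def sigma3_def
  by (intro lattice_isometry_comp lattice_isometry_wr; simp add: ip_explicit basis_defs)

lemma sigma_aStd_3: "sigma3 (sigma2 (aStd 3)) = aStd 1"
  by (simp add: vec_eq_iff forall_10 sigma_component aStd_def basis_defs)

lemma sigma_w3: "sigma3 (sigma2 (w 3 C)) = w 1 (sigma3 (sigma2 C))"
  using lattice_isometry_wr_conj[OF lattice_isometry_sigma, of "aStd 3" C]
  by (simp add: w_def sigma_aStd_3)

lemma w1_conj_phi_std:
  "(sigma3 \<circ> sigma2 \<circ> w 1 \<circ> w 2 \<circ> w 0 \<circ> w 1) C = (w 1 \<circ> phi_std \<circ> w 1) C"
  by (simp add: sigma_w3 w_w)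

theorem mainTheorem4:
  shows "bij iota \<and> (\<forall>C D. ip (iota C) (iota D) = ip C D)
    \<and> (\<forall>i<6. iota (dStd i) = dX i)
    \<and> iota (aStd 0) = F 1 - F 2
    \<and> iota (aStd 1) = Hy - Fsum [1,3]
    \<and> iota (aStd 2) = F 3 - F 4
    \<and> iota (aStd 3) = 2 *s Hx + Hy - Fsum [1,3,5,6,7,8]
    \<and> iota deltaStd = - KX
    \<and> phiX (iota (aStd 0)) = iota (aStd 0)
    \<and> phiX (iota (aStd 1)) = iota (aStd 1) - (- KX)
    \<and> phiX (iota (aStd 2)) = iota (aStd 2)
    \<and> phiX (iota (aStd 3)) = iota (aStd 3) + (- KX)
    \<and> (\<forall>C. phiX (iota C) = iota ((sigma3 \<circ> sigma2 \<circ> w 1 \<circ> w 2 \<circ> w 0 \<circ> w 1) C))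
    \<and> (\<forall>C. (sigma3 \<circ> sigma2 \<circ> w 1 \<circ> w 2 \<circ> w 0 \<circ> w 1) C
           = (w 1 \<circ> (sigma3 \<circ> sigma2 \<circ> w 3 \<circ> w 1 \<circ> w 2 \<circ> w 0) \<circ> w 1) C)
    \<and> (sigma3 \<circ> sigma2 \<circ> w 3 \<circ> w 1 \<circ> w 2 \<circ> w 0) (aStd 0) = aStd 0 - deltaStd
    \<and> (sigma3 \<circ> sigma2 \<circ> w 3 \<circ> w 1 \<circ> w 2 \<circ> w 0) (aStd 1) = aStd 1 + deltaStd
    \<and> (sigma3 \<circ> sigma2 \<circ> w 3 \<circ> w 1 \<circ> w 2 \<circ> w 0) (aStd 2) = aStd 2 - deltaStd
    \<and> (sigma3 \<circ> sigma2 \<circ> w 3 \<circ> w 1 \<circ> w 2 \<circ> w 0) (aStd 3) = aStd 3 + deltaStd"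
  by (intro conjI allI impI bij_iota ip_iota iota_dStd iota_aStd iota_deltaStd phiX_iota_aStd
      phiX_iota w1_conj_phi_std phi_std_aStd)

end
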